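(* Let $Y_1,Y_2\subseteq Y$ and $Z_1,Z_2\subseteq Z$ with $Y_1\cap Y_2=\emptyset$ and $Z_1\cap Z_2=\emptyset$. Let $f\in\mathbb{F}[Y_1,Z_1]$ and $g\in\mathbb{F}[Y_2,Z_2]$. Then $\mathrm{maxrank}(M_{fg})=\mathrm{maxrank}(M_f)\cdot\mathrm{maxrank}(M_g)$.
   Context: $\mathbb{F}$ is a field, $Y=\{y_1,\dots,y_m\}$ and $Z=\{z_1,\dots,z_m\}$ are disjoint sets of variables. For $f\in\mathbb{F}[Y,Z]$, the polynomial coefficient matrix $M_f$ is the $2^m\times 2^m$ matrix with entries in $\mathbb{F}[Y,Z]$, rows indexed by monic multilinear monomials $p$ in $Y$ and columns by monic multilinear monomials $q$ in $Z$, where $M_f(p,q)=G$ if and only if $f$ can be uniquely written as $f=pq\,G+Q$ with $G$ containing no variable other than those present in $p$ and $q$, and $Q$ having no monomial which is divisible by $pq$ and contains only variables present in $p$ and $q$. For $S:Y\cup Z\to\mathbb{F}$, $M_f|_S$ is obtained by evaluating each entry at $S$, and $\mathrm{maxrank}(M_f)=\max_S\mathrm{rank}(M_f|_S)$. *)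

theory Defs
  imports "HOL-Library.Poly_Mapping" "Jordan_Normal_Form.DL_Rank"
begin

text \<open>Variables: Yv i stands for y_(i+1), Zv i stands for z_(i+1).\<close>
datatype var = Yv nat | Zv nat

definition Yset :: "nat \<Rightarrow> var set" where "Yset m = {Yv i | i. i < m}"
definition Zset :: "nat \<Rightarrow> var set" where "Zset m = {Zv i | i. i < m}"

type_synonym 'a mpoly = "(var \<Rightarrow>\<^sub>0 nat) \<Rightarrow>\<^sub>0 'a"

definition vars :: "'a::zero mpoly \<Rightarrow> var set" where
  "vars f = \<Union> (Poly_Mapping.keys ` Poly_Mapping.keys f)"

definition mlmono :: "var set \<Rightarrow> (var \<Rightarrow>\<^sub>0 nat)" where
  "mlmono V = (\<Sum>v\<in>V. Poly_Mapping.single v 1)"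

definition mono_poly :: "var set \<Rightarrow> 'a::{zero,one} mpoly" where
  "mono_poly V = Poly_Mapping.single (mlmono V) 1"

text \<open>Entry M_f(p,q) for p = product of the variables in P (subset of Y) and
  q = product of the variables in Q (subset of Z): the unique G with
  f = pq G + R, vars G within P \<union> Q, and R having no monomial which is divisible
  by pq and contains only variables of P \<union> Q.\<close>
definition coeff_entry :: "'a::comm_ring_1 mpoly \<Rightarrow> var set \<Rightarrow> var set \<Rightarrow> 'a mpoly" where
  "coeff_entry f P Q = (THE G. vars G \<subseteq> P \<union> Q \<and>
     (\<forall>\<mu>\<in>Poly_Mapping.keys (f - mono_poly (P \<union> Q) * G).
        \<not> ((\<exists>\<nu>. \<mu> = mlmono (P \<union> Q) + \<nu>) \<and> Poly_Mapping.keys \<mu> \<subseteq> P \<union> Q)))"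

definition peval :: "(var \<Rightarrow> 'a::comm_ring_1) \<Rightarrow> 'a mpoly \<Rightarrow> 'a" where
  "peval S f = (\<Sum>\<mu>\<in>Poly_Mapping.keys f. Poly_Mapping.lookup f \<mu> * (\<Prod>v\<in>Poly_Mapping.keys \<mu>. S v ^ Poly_Mapping.lookup \<mu> v))"

text \<open>Index i < 2^m encodes the subset {j. bit i j} of {0..<m}; this is a
  bijection between {0..<2^m} and the subsets of {0..<m}.\<close>
definition idx :: "nat \<Rightarrow> nat set" where "idx i = {j. bit i j}"

definition Mf_eval :: "nat \<Rightarrow> 'a::field mpoly \<Rightarrow> (var \<Rightarrow> 'a) \<Rightarrow> 'a mat" where
  "Mf_eval m f S = mat (2^m) (2^m)
     (\<lambda>(i,j). peval S (coeff_entry f (Yv ` idx i) (Zv ` idx j)))"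

definition maxrank :: "nat \<Rightarrow> 'a::field mpoly \<Rightarrow> nat" where
  "maxrank m f = Max {vec_space.rank (2^m) (Mf_eval m f S) | S. True}"

end

theory Submission
  imports Defs
begin

text \<open>If f and g depend on disjoint sets of variables, the variables of an entry position pq
  split into those of f and those of g, and the entry of M_(fg) at pq is either zero or the
  product of the matching entries of M_f and M_g. So, up to zero rows and columns and a
  reindexing, M_(fg)|_S is the Kronecker product of M_f|_S and M_g|_S, whose rank is the product
  of their ranks. As f and g share no variable, an assignment maximizing the rank of M_f and one
  maximizing that of M_g merge into a single assignment doing both.\<close>

section \<open>Rank through independent and spanning sets of columns\<close>

definition indep_cols :: "'a::field mat \<Rightarrow> nat set \<Rightarrow> bool" where
  "indep_cols A J \<longleftrightarrow> J \<subseteq> {..<dim_col A} \<and>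
     (\<forall>v. (\<forall>i<dim_row A. (\<Sum>j\<in>J. A $$ (i,j) * v j) = 0) \<longrightarrow> (\<forall>j\<in>J. v j = 0))"

definition spanning_cols :: "'a::field mat \<Rightarrow> nat set \<Rightarrow> bool" where
  "spanning_cols A J \<longleftrightarrow>
     (\<forall>j<dim_col A. \<exists>\<gamma>. \<forall>i<dim_row A. A $$ (i,j) = (\<Sum>t\<in>J. \<gamma> t * A $$ (i,t)))"

lemma indep_colsD:
  assumes "indep_cols A J" "\<And>i. i < dim_row A \<Longrightarrow> (\<Sum>j\<in>J. A $$ (i,j) * v j) = 0" "j \<in> J"
  shows "v j = 0"
  using assms unfolding indep_cols_def by blast

lemma indep_cols_subset: "indep_cols A J \<Longrightarrow> J \<subseteq> {..<dim_col A}"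
  unfolding indep_cols_def by blast

lemma indep_cols_finite: "indep_cols A J \<Longrightarrow> finite J"
  using finite_subset[OF indep_cols_subset] by blast

lemma sum_mult_indicator:
  assumes "finite J" "j \<in> J"
  shows "(\<Sum>t\<in>J. c t * (if t = j then 1 else 0)) = (c j :: 'a::semiring_1)"
proof -
  have "(\<Sum>t\<in>J. c t * (if t = j then 1 else 0)) = (\<Sum>t\<in>J. if t = j then c t else 0)"
    by (rule sum.cong) simp_all
  then show ?thesis using assms by simp
qed

lemma indep_cols_nonzero:
  assumes J: "indep_cols A J" and j: "j \<in> J"
  obtains i where "i < dim_row A" "A $$ (i,j) \<noteq> 0"
proof -
  have "\<not> (\<forall>i<dim_row A. A $$ (i,j) = 0)"
  proof
    assume "\<forall>i<dim_row A. A $$ (i,j) = 0"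
    then have "(if j = j then 1 else (0::'a)) = 0"
      using indep_colsD[OF J _ j, of "\<lambda>t. if t = j then 1 else 0"]
      by (simp add: sum_mult_indicator[OF indep_cols_finite[OF J] j])
    then show False by simp
  qed
  then show ?thesis using that by blast
qed

lemma inj_on_col_if_indep_cols:
  assumes J: "indep_cols A J"
  shows "inj_on (col A) J"
proof (rule inj_onI, rule ccontr)
  fix j j' assume jj: "j \<in> J" "j' \<in> J" "col A j = col A j'" "j \<noteq> j'"
  have jn: "j < dim_col A" "j' < dim_col A" using jj(1,2) indep_cols_subset[OF J] by auto
  define v where "v k = (if k = j then 1 else if k = j' then -1 else (0::'a))" for k
  have "v j = 0"
  proof (rule indep_colsD[OF J _ jj(1)])
    fix i assume i: "i < dim_row A"
    have "(\<Sum>k\<in>J. A $$ (i,k) * v k) = (\<Sum>k\<in>{j,j'}. A $$ (i,k) * v k)"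
      by (rule sum.mono_neutral_right) (use indep_cols_finite[OF J] jj in \<open>auto simp: v_def\<close>)
    also have "\<dots> = col A j $ i - col A j' $ i"
      using jj(1,2,4) jn i by (simp add: v_def)
    finally show "(\<Sum>k\<in>J. A $$ (i,k) * v k) = 0" using jj(3) by simp
  qed
  then show False by (simp add: v_def)
qed

context vec_space
begin

lemma lin_indpt_col_image:
  assumes A: "A \<in> carrier_mat n nc" and J: "indep_cols A J"
  shows "lin_indpt (col A ` J)"
proof
  have JA: "J \<subseteq> {..<nc}" using indep_cols_subset[OF J] A by simp
  let ?U = "col A ` J"
  have Ucar: "?U \<subseteq> carrier_vec n" using JA A by auto
  assume "lin_dep ?U"
  then have "\<exists>B a w. finite B \<and> B \<subseteq> ?U \<and> True \<and> lincomb a B = 0\<^sub>v n \<and> w \<in> B \<and> a w \<noteq> 0"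
    unfolding lin_dep_def .
  then obtain B a w where B0: "finite B \<and> B \<subseteq> ?U \<and> True \<and> lincomb a B = 0\<^sub>v n \<and> w \<in> B \<and> a w \<noteq> 0"
    by (elim exE)
  from B0 have B: "finite B" "B \<subseteq> ?U" "lincomb a B = 0\<^sub>v n" "w \<in> B" "a w \<noteq> 0"
    by simp_all
  define v where "v = (\<lambda>k. if k \<in> J \<and> col A k \<in> B then a (col A k) else 0)"
  have "(\<Sum>k\<in>J. A $$ (i,k) * v k) = 0" if "i < dim_row A" for i
  proof -
    have i: "i < n" using that A by simp
    have "(\<Sum>k\<in>J. A $$ (i,k) * v k) = (\<Sum>k\<in>{k\<in>J. col A k \<in> B}. A $$ (i,k) * v k)"
      by (rule sum.mono_neutral_right) (use indep_cols_finite[OF J] in \<open>auto simp: v_def\<close>)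
    also have "\<dots> = (\<Sum>k\<in>{k\<in>J. col A k \<in> B}. a (col A k) * col A k $ i)"
    proof (rule sum.cong[OF refl])
      fix k assume k: "k \<in> {k\<in>J. col A k \<in> B}"
      then have kn: "k < nc" using JA by auto
      have "col A k $ i = A $$ (i,k)" using kn i A by (intro index_col) auto
      then show "A $$ (i,k) * v k = a (col A k) * col A k $ i" using k unfolding v_def by simp
    qed
    also have "\<dots> = (\<Sum>x\<in>col A ` {k\<in>J. col A k \<in> B}. a x * x $ i)"
    proof -
      have "inj_on (col A) {k\<in>J. col A k \<in> B}"
        using inj_on_col_if_indep_cols[OF J] by (rule inj_on_subset) auto
      then show ?thesis by (simp add: sum.reindex)
    qed
    also have "col A ` {k\<in>J. col A k \<in> B} = B" using B(2) by auto
    also have "(\<Sum>x\<in>B. a x * x $ i) = lincomb a B $ i"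
      by (rule lincomb_index[symmetric]) (use i B(2) Ucar in auto)
    also have "\<dots> = 0" using B(3) i by simp
    finally show ?thesis .
  qed
  from indep_colsD[OF J this] have "\<forall>k\<in>J. v k = 0" by blast
  moreover obtain k where "k \<in> J" "w = col A k" using B(2,4) by auto
  ultimately show False using B(4,5) by (auto simp: v_def)
qed

lemma card_le_rank_if_indep_cols:
  assumes A: "A \<in> carrier_mat n nc" and J: "indep_cols A J"
  shows "card J \<le> rank A"
proof -
  have "col A ` J \<subseteq> set (cols A)" using A indep_cols_subset[OF J] by (auto simp: cols_def)
  then have "card (col A ` J) \<le> rank A"
    using rank_ge_card_indpt[OF A _ lin_indpt_col_image[OF A J]] by blast
  then show ?thesis using card_image[OF inj_on_col_if_indep_cols[OF J]] by simp
qed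

lemma col_in_span_if_combination:
  assumes A: "A \<in> carrier_mat n nc" and T: "T \<subseteq> {..<nc}" and j: "j < nc"
    and \<gamma>: "\<forall>i<n. A $$ (i,j) = (\<Sum>t\<in>T. \<gamma> t * A $$ (i,t))"
  shows "col A j \<in> span (col A ` T)"
proof -
  let ?W = "col A ` T"
  have finT: "finite T" using T finite_subset by blast
  have W: "finite ?W" "?W \<subseteq> carrier_vec n" using finT T A by auto
  define a where "a x = (\<Sum>t\<in>{t\<in>T. col A t = x}. \<gamma> t)" for x
  have "col A j = lincomb a ?W"
  proof (rule eq_vecI)
    show "dim_vec (col A j) = dim_vec (lincomb a ?W)" using A lincomb_dim[OF W] by simp
    fix i assume "i < dim_vec (lincomb a ?W)"
    then have i: "i < n" using lincomb_dim[OF W] by simp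
    have "lincomb a ?W $ i = (\<Sum>x\<in>?W. \<Sum>t\<in>{t\<in>T. col A t = x}. \<gamma> t * A $$ (i,t))"
      unfolding lincomb_index[OF i W(2)] a_def sum_distrib_right
      by (intro sum.cong refl) (use i A T in auto)
    also have "\<dots> = (\<Sum>t\<in>T. \<gamma> t * A $$ (i,t))" by (rule sum.image_gen[symmetric, OF finT])
    finally show "col A j $ i = lincomb a ?W $ i" using \<gamma> i j A by simp
  qed
  then show ?thesis using W by auto
qed

lemma rank_le_card_if_spanning_cols:
  assumes A: "A \<in> carrier_mat n nc" and T: "T \<subseteq> {..<nc}" and sp: "spanning_cols A T"
  shows "rank A \<le> card T"
proof -
  let ?W = "col A ` T"
  have finT: "finite T" using T finite_subset by blast
  have W: "finite ?W" "?W \<subseteq> carrier_vec n" using finT T A by auto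
  obtain S where S: "maximal S (\<lambda>T. T \<subseteq> set (cols A) \<and> lin_indpt T)"
    using maximal_exists[of "(\<lambda>T. T \<subseteq> set (cols A) \<and> lin_indpt T)" "card (set (cols A))" "{}"]
    by (meson List.finite_set card_mono empty_iff empty_subsetI finite_lin_indpt2 rev_finite_subset)
  have Scols: "S \<subseteq> set (cols A)" and Sli: "lin_indpt S" using S unfolding maximal_def by auto
  have finS: "finite S" using Scols finite_subset by blast
  have "S \<subseteq> span ?W"
  proof
    fix s assume "s \<in> S"
    then obtain j where j: "j < nc" "s = col A j" using Scols A unfolding cols_def by auto
    moreover obtain \<gamma> where "\<forall>i<n. A $$ (i,j) = (\<Sum>t\<in>T. \<gamma> t * A $$ (i,t))"
      using sp j A unfolding spanning_cols_def by auto
    ultimately show "s \<in> span ?W" using col_in_span_if_combination[OF A T] by blast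
  qed
  from replacement[OF finS W Sli this] obtain C :: "'a vec set"
    where "int (card C) \<le> int (card ?W) - int (card S)" by blast
  then have "card S \<le> card ?W" by linarith
  also have "card ?W \<le> card T" by (rule card_image_le[OF finT])
  finally show ?thesis using rank_card_indpt[OF A S] by simp
qed

end

lemma combination_if_not_indep_insert:
  assumes J: "indep_cols A J" and j: "j < dim_col A" "j \<notin> J"
    and dep: "\<not> indep_cols A (insert j J)"
  obtains \<gamma> where "\<forall>i<dim_row A. A $$ (i,j) = (\<Sum>t\<in>J. \<gamma> t * A $$ (i,t))"
proof -
  have finJ: "finite J" using indep_cols_finite[OF J] .
  have "insert j J \<subseteq> {..<dim_col A}" using j indep_cols_subset[OF J] by simp
  then have "\<exists>v. (\<forall>i<dim_row A. (\<Sum>t\<in>insert j J. A $$ (i,t) * v t) = 0) \<and> \<not> (\<forall>t\<in>insert j J. v t = 0)"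
    using dep unfolding indep_cols_def by blast
  then obtain v where v0: "\<forall>i<dim_row A. (\<Sum>t\<in>insert j J. A $$ (i,t) * v t) = 0"
    and vnz: "\<not> (\<forall>t\<in>insert j J. v t = 0)"
    by blast
  have v: "A $$ (i,j) * v j + (\<Sum>t\<in>J. A $$ (i,t) * v t) = 0" if "i < dim_row A" for i
    using v0 that j(2) finJ by simp
  have vj: "v j \<noteq> 0"
  proof
    assume "v j = 0"
    then have "\<forall>i<dim_row A. (\<Sum>t\<in>J. A $$ (i,t) * v t) = 0" using v by simp
    then have "\<forall>t\<in>J. v t = 0" using J unfolding indep_cols_def by blast
    then show False using vnz \<open>v j = 0\<close> by auto
  qed
  have "A $$ (i,j) = (\<Sum>t\<in>J. (- v t / v j) * A $$ (i,t))" if "i < dim_row A" for i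
  proof -
    have "(\<Sum>t\<in>J. (- v t / v j) * A $$ (i,t)) = - (\<Sum>t\<in>J. A $$ (i,t) * v t) / v j"
      by (simp add: sum_divide_distrib sum_negf mult.commute)
    also have "(\<Sum>t\<in>J. A $$ (i,t) * v t) = - (A $$ (i,j) * v j)"
      using v[OF that] by (simp add: eq_neg_iff_add_eq_0 add.commute)
    finally show ?thesis using vj by simp
  qed
  then show ?thesis by (intro that allI impI)
qed

lemma indep_spanning_cols_exists:
  obtains J where "indep_cols A J" "spanning_cols A J"
proof -
  let ?F = "{J. indep_cols A J}"
  have "finite ?F" by (rule finite_subset[of _ "Pow {..<dim_col A}"]) (auto simp: indep_cols_def)
  moreover have "{} \<in> ?F" by (auto simp: indep_cols_def)
  ultimately obtain J where J: "indep_cols A J" and max: "\<And>J'. indep_cols A J' \<Longrightarrow> J \<subseteq> J' \<Longrightarrow> J = J'"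
    using finite_has_maximal[of ?F] by blast
  have "\<exists>\<gamma>. \<forall>i<dim_row A. A $$ (i,j) = (\<Sum>t\<in>J. \<gamma> t * A $$ (i,t))" if j: "j < dim_col A" for j
  proof (cases "j \<in> J")
    case True
    define \<delta> where "\<delta> t = (if t = j then 1 else (0::'a))" for t
    have "A $$ (i,j) = (\<Sum>t\<in>J. \<delta> t * A $$ (i,t))" for i
      using sum_mult_indicator[OF indep_cols_finite[OF J] True, of "\<lambda>t. A $$ (i,t)"]
      by (simp add: \<delta>_def mult.commute)
    then show ?thesis by blast
  next
    case False
    then have "\<not> indep_cols A (insert j J)" using max[of "insert j J"] by blast
    from combination_if_not_indep_insert[OF J j False this] obtain \<gamma>
      where "\<forall>i<dim_row A. A $$ (i,j) = (\<Sum>t\<in>J. \<gamma> t * A $$ (i,t))" .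
    then show ?thesis by blast
  qed
  then show ?thesis using that J unfolding spanning_cols_def by blast
qed

lemma rank_eq_card_indep_spanning_cols:
  assumes A: "A \<in> carrier_mat n nc" and "indep_cols A J" "spanning_cols A J"
  shows "vec_space.rank n A = card J"
proof (rule antisym)
  show "vec_space.rank n A \<le> card J"
    using vec_space.rank_le_card_if_spanning_cols[OF A _ assms(3)] indep_cols_subset[OF assms(2)] A
    by (simp add: carrier_matD(2))
  show "card J \<le> vec_space.rank n A"
    using vec_space.card_le_rank_if_indep_cols[OF A assms(2)] .
qed

section \<open>Rank of an embedded Kronecker product\<close>

text \<open>C is, up to zero rows and columns and a reindexing of rows by (pa, pb) and of
  columns by (qa, qb), the Kronecker product of A and B.\<close>

locale kronecker_embedding =
  fixes A B C :: "'a::field mat"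
    and RA KA RB KB RC KC :: "nat \<Rightarrow> bool"
    and pa qa pb qb :: "nat \<Rightarrow> nat"
    and rcomb ccomb :: "nat \<Rightarrow> nat \<Rightarrow> nat"
  assumes A_support: "\<And>i j. i < dim_row A \<Longrightarrow> j < dim_col A \<Longrightarrow> A $$ (i,j) \<noteq> 0 \<Longrightarrow> RA i \<and> KA j"
    and B_support: "\<And>i j. i < dim_row B \<Longrightarrow> j < dim_col B \<Longrightarrow> B $$ (i,j) \<noteq> 0 \<Longrightarrow> RB i \<and> KB j"
    and C_entry: "\<And>i j. i < dim_row C \<Longrightarrow> j < dim_col C \<Longrightarrow>
      C $$ (i,j) = (if RC i \<and> KC j then A $$ (pa i, qa j) * B $$ (pb i, qb j) else 0)"
    and row_proj: "\<And>i. i < dim_row C \<Longrightarrow> pa i < dim_row A \<and> pb i < dim_row B"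
    and col_proj: "\<And>j. j < dim_col C \<Longrightarrow> qa j < dim_col A \<and> qb j < dim_col B"
    and row_comb: "\<And>a b. a < dim_row A \<Longrightarrow> b < dim_row B \<Longrightarrow> RA a \<Longrightarrow> RB b \<Longrightarrow>
      rcomb a b < dim_row C \<and> RC (rcomb a b) \<and> pa (rcomb a b) = a \<and> pb (rcomb a b) = b"
    and col_comb: "\<And>a b. a < dim_col A \<Longrightarrow> b < dim_col B \<Longrightarrow> KA a \<Longrightarrow> KB b \<Longrightarrow>
      ccomb a b < dim_col C \<and> KC (ccomb a b) \<and> qa (ccomb a b) = a \<and> qb (ccomb a b) = b"
begin

context
  fixes JA JB
  assumes JA: "indep_cols A JA" and JB: "indep_cols B JB"
begin

lemma ccomb_indep_cols:
  assumes "a \<in> JA" "b \<in> JB"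
  shows "ccomb a b < dim_col C \<and> KC (ccomb a b) \<and> qa (ccomb a b) = a \<and> qb (ccomb a b) = b"
proof -
  have a: "a < dim_col A" and b: "b < dim_col B"
    using assms indep_cols_subset[OF JA] indep_cols_subset[OF JB] by auto
  obtain i where "i < dim_row A" "A $$ (i,a) \<noteq> 0" using indep_cols_nonzero[OF JA assms(1)] .
  then have "KA a" using A_support a by blast
  moreover obtain i' where "i' < dim_row B" "B $$ (i',b) \<noteq> 0" using indep_cols_nonzero[OF JB assms(2)] .
  then have "KB b" using B_support b by blast
  ultimately show ?thesis using col_comb a b by blast
qed

lemma inj_on_ccomb: "inj_on (\<lambda>(a,b). ccomb a b) (JA \<times> JB)"
proof (rule inj_onI, clarify)
  fix a b a' b' assume h: "a \<in> JA" "b \<in> JB" "a' \<in> JA" "b' \<in> JB" "ccomb a b = ccomb a' b'"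
  then show "a = a' \<and> b = b'"
    using ccomb_indep_cols[OF h(1,2)] ccomb_indep_cols[OF h(3,4)] by metis
qed

lemma sum_ccomb_image:
  "(\<Sum>t\<in>(\<lambda>(a,b). ccomb a b) ` (JA \<times> JB). g t) = (\<Sum>a\<in>JA. \<Sum>b\<in>JB. g (ccomb a b))"
proof -
  have "(\<Sum>t\<in>(\<lambda>(a,b). ccomb a b) ` (JA \<times> JB). g t) = (\<Sum>x\<in>JA \<times> JB. g ((\<lambda>(a,b). ccomb a b) x))"
    by (rule sum.reindex[OF inj_on_ccomb, unfolded comp_def])
  then show ?thesis by (simp add: sum.cartesian_product split_def)
qed

lemma C_ccomb:
  assumes "i < dim_row C" "RC i" "a \<in> JA" "b \<in> JB"
  shows "C $$ (i, ccomb a b) = A $$ (pa i, a) * B $$ (pb i, b)"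
  using C_entry[of i "ccomb a b"] ccomb_indep_cols[OF assms(3,4)] assms(1,2) by simp

lemma product_combination_vanishes:
  assumes v: "\<forall>i<dim_row C. (\<Sum>t\<in>(\<lambda>(a,b). ccomb a b) ` (JA \<times> JB). C $$ (i,t) * v t) = 0"
    and i: "i < dim_row A" "i' < dim_row B"
  shows "(\<Sum>a\<in>JA. A $$ (i,a) * (\<Sum>b\<in>JB. B $$ (i',b) * v (ccomb a b))) = 0"
proof (cases "RA i \<and> RB i'")
  case True
  let ?r = "rcomb i i'"
  have r: "?r < dim_row C" "RC ?r" "pa ?r = i" "pb ?r = i'" using row_comb[OF i] True by auto
  have "(\<Sum>a\<in>JA. A $$ (i,a) * (\<Sum>b\<in>JB. B $$ (i',b) * v (ccomb a b)))
      = (\<Sum>a\<in>JA. \<Sum>b\<in>JB. C $$ (?r, ccomb a b) * v (ccomb a b))"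
    by (simp add: sum_distrib_left C_ccomb[OF r(1,2)] r(3,4) mult.assoc cong: sum.cong)
  also have "\<dots> = 0" using v r(1) by (simp add: sum_ccomb_image)
  finally show ?thesis .
next
  case False
  then have "(\<forall>a\<in>JA. A $$ (i,a) = 0) \<or> (\<forall>b\<in>JB. B $$ (i',b) = 0)"
    using A_support B_support i indep_cols_subset[OF JA] indep_cols_subset[OF JB] by blast
  then show ?thesis by auto
qed

lemma indep_cols_ccomb_image: "indep_cols C ((\<lambda>(a,b). ccomb a b) ` (JA \<times> JB))"
  unfolding indep_cols_def
proof (intro conjI allI impI)
  show "(\<lambda>(a,b). ccomb a b) ` (JA \<times> JB) \<subseteq> {..<dim_col C}" using ccomb_indep_cols by auto
  fix v assume v: "\<forall>i<dim_row C. (\<Sum>t\<in>(\<lambda>(a,b). ccomb a b) ` (JA \<times> JB). C $$ (i,t) * v t) = 0"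
  have "(\<Sum>b\<in>JB. B $$ (i',b) * v (ccomb a b)) = 0" if "i' < dim_row B" "a \<in> JA" for i' a
    using indep_colsD[OF JA _ that(2), where v = "\<lambda>a. \<Sum>b\<in>JB. B $$ (i',b) * v (ccomb a b)"]
      product_combination_vanishes[OF v _ that(1)] by blast
  then have "v (ccomb a b) = 0" if "a \<in> JA" "b \<in> JB" for a b
    using indep_colsD[OF JB _ that(2), where v = "\<lambda>b. v (ccomb a b)"] that(1) by blast
  then show "\<forall>t\<in>(\<lambda>(a,b). ccomb a b) ` (JA \<times> JB). v t = 0" by auto
qed

lemma col_combination_ccomb_image:
  assumes i: "i < dim_row C" and j: "j < dim_col C" and "KC j"
    and \<gamma>: "\<forall>i<dim_row A. A $$ (i, qa j) = (\<Sum>t\<in>JA. \<gamma> t * A $$ (i,t))"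
    and \<delta>: "\<forall>i<dim_row B. B $$ (i, qb j) = (\<Sum>t\<in>JB. \<delta> t * B $$ (i,t))"
  shows "C $$ (i,j) = (\<Sum>t\<in>(\<lambda>(a,b). ccomb a b) ` (JA \<times> JB). \<gamma> (qa t) * \<delta> (qb t) * C $$ (i,t))"
proof (cases "RC i")
  case False
  have "C $$ (i,t) = 0" if "t \<in> (\<lambda>(a,b). ccomb a b) ` (JA \<times> JB)" for t
    using C_entry[OF i, of t] ccomb_indep_cols that False by auto
  then show ?thesis using C_entry[OF i j] False by simp
next
  case True
  have p: "pa i < dim_row A" "pb i < dim_row B" using row_proj[OF i] by auto
  have "C $$ (i,j) = A $$ (pa i, qa j) * B $$ (pb i, qb j)" using C_entry[OF i j] True \<open>KC j\<close> by simp
  also have "\<dots> = (\<Sum>a\<in>JA. \<Sum>b\<in>JB. (\<gamma> a * A $$ (pa i,a)) * (\<delta> b * B $$ (pb i,b)))"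
    using \<gamma> \<delta> p by (simp add: sum_product)
  also have "\<dots> = (\<Sum>a\<in>JA. \<Sum>b\<in>JB. \<gamma> (qa (ccomb a b)) * \<delta> (qb (ccomb a b)) * C $$ (i, ccomb a b))"
    by (intro sum.cong refl) (simp add: C_ccomb[OF i True] ccomb_indep_cols mult_ac)
  also have "\<dots> = (\<Sum>t\<in>(\<lambda>(a,b). ccomb a b) ` (JA \<times> JB). \<gamma> (qa t) * \<delta> (qb t) * C $$ (i,t))"
    by (rule sum_ccomb_image[symmetric])
  finally show ?thesis .
qed

lemma spanning_cols_ccomb_image:
  assumes "spanning_cols A JA" "spanning_cols B JB"
  shows "spanning_cols C ((\<lambda>(a,b). ccomb a b) ` (JA \<times> JB))"
  unfolding spanning_cols_def
proof (intro allI impI)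
  fix j assume j: "j < dim_col C"
  show "\<exists>\<gamma>. \<forall>i<dim_row C. C $$ (i,j) = (\<Sum>t\<in>(\<lambda>(a,b). ccomb a b) ` (JA \<times> JB). \<gamma> t * C $$ (i,t))"
  proof (cases "KC j")
    case False
    then have "\<forall>i<dim_row C. C $$ (i,j) = (\<Sum>t\<in>(\<lambda>(a,b). ccomb a b) ` (JA \<times> JB). 0 * C $$ (i,t))"
      using C_entry j by simp
    then show ?thesis by (rule exI[where x = "\<lambda>_. 0"])
  next
    case True
    have q: "qa j < dim_col A" "qb j < dim_col B" using col_proj[OF j] by auto
    obtain \<gamma> where \<gamma>: "\<forall>i<dim_row A. A $$ (i, qa j) = (\<Sum>t\<in>JA. \<gamma> t * A $$ (i,t))"
      using assms(1) q(1) unfolding spanning_cols_def by blast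
    obtain \<delta> where \<delta>: "\<forall>i<dim_row B. B $$ (i, qb j) = (\<Sum>t\<in>JB. \<delta> t * B $$ (i,t))"
      using assms(2) q(2) unfolding spanning_cols_def by blast
    have "\<forall>i<dim_row C. C $$ (i,j) =
        (\<Sum>t\<in>(\<lambda>(a,b). ccomb a b) ` (JA \<times> JB). \<gamma> (qa t) * \<delta> (qb t) * C $$ (i,t))"
      using col_combination_ccomb_image[OF _ j True \<gamma> \<delta>] by blast
    then show ?thesis by (rule exI[where x = "\<lambda>t. \<gamma> (qa t) * \<delta> (qb t)"])
  qed
qed

end

theorem rank_eq_mult:
  "vec_space.rank (dim_row C) C = vec_space.rank (dim_row A) A * vec_space.rank (dim_row B) B"
proof -
  obtain JA where JA: "indep_cols A JA" "spanning_cols A JA" using indep_spanning_cols_exists .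
  obtain JB where JB: "indep_cols B JB" "spanning_cols B JB" using indep_spanning_cols_exists .
  have "vec_space.rank (dim_row C) C = card ((\<lambda>(a,b). ccomb a b) ` (JA \<times> JB))"
    using rank_eq_card_indep_spanning_cols[OF carrier_matI[OF refl refl]
        indep_cols_ccomb_image[OF JA(1) JB(1)] spanning_cols_ccomb_image[OF JA(1) JB(1) JA(2) JB(2)]] .
  also have "\<dots> = card JA * card JB"
    by (simp add: card_image[OF inj_on_ccomb[OF JA(1) JB(1)]] card_cartesian_product)
  also have "\<dots> = vec_space.rank (dim_row A) A * vec_space.rank (dim_row B) B"
    using rank_eq_card_indep_spanning_cols[OF carrier_matI[OF refl refl] JA]
      rank_eq_card_indep_spanning_cols[OF carrier_matI[OF refl refl] JB] by simp
  finally show ?thesis .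
qed

end

definition monom_eval :: "(var \<Rightarrow> 'a::comm_ring_1) \<Rightarrow> (var \<Rightarrow>\<^sub>0 nat) \<Rightarrow> 'a" where
  "monom_eval S \<mu> = (\<Prod>v\<in>Poly_Mapping.keys \<mu>. S v ^ Poly_Mapping.lookup \<mu> v)"

definition lin_ext :: "((var \<Rightarrow>\<^sub>0 nat) \<Rightarrow> 'a) \<Rightarrow> 'a::comm_ring_1 mpoly \<Rightarrow> 'a" where
  "lin_ext h p = (\<Sum>\<mu>\<in>Poly_Mapping.keys p. Poly_Mapping.lookup p \<mu> * h \<mu>)"

lemma peval_eq_lin_ext: "peval S p = lin_ext (monom_eval S) p"
  unfolding peval_def lin_ext_def monom_eval_def ..

lemma lin_ext_superset:
  assumes "finite X" "Poly_Mapping.keys p \<subseteq> X"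
  shows "lin_ext h p = (\<Sum>\<mu>\<in>X. Poly_Mapping.lookup p \<mu> * h \<mu>)"
  unfolding lin_ext_def by (rule sum.mono_neutral_left) (use assms in \<open>auto simp: in_keys_iff\<close>)

lemma lin_ext_add: "lin_ext h (p + q) = lin_ext h p + lin_ext h q"
proof -
  let ?X = "Poly_Mapping.keys p \<union> Poly_Mapping.keys q"
  have "lin_ext h (p + q) = (\<Sum>\<mu>\<in>?X. Poly_Mapping.lookup (p + q) \<mu> * h \<mu>)"
    by (rule lin_ext_superset) (use keys_add[of p q] in auto)
  also have "\<dots> = (\<Sum>\<mu>\<in>?X. Poly_Mapping.lookup p \<mu> * h \<mu>) + (\<Sum>\<mu>\<in>?X. Poly_Mapping.lookup q \<mu> * h \<mu>)"
    by (simp add: lookup_add distrib_right sum.distrib)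
  also have "\<dots> = lin_ext h p + lin_ext h q"
    by (simp add: lin_ext_superset[symmetric])
  finally show ?thesis .
qed

lemma lin_ext_zero: "lin_ext h 0 = 0"
  by (simp add: lin_ext_def)

lemma lin_ext_sum: "finite I \<Longrightarrow> lin_ext h (\<Sum>i\<in>I. p i) = (\<Sum>i\<in>I. lin_ext h (p i))"
  by (induction I rule: finite_induct) (simp_all add: lin_ext_zero lin_ext_add)

lemma lin_ext_single: "lin_ext h (Poly_Mapping.single \<mu> c) = c * h \<mu>"
  by (simp add: lin_ext_def)

lemma sum_single_lookup:
  "(\<Sum>\<mu>\<in>Poly_Mapping.keys p. Poly_Mapping.single \<mu> (Poly_Mapping.lookup p \<mu>)) = p"
proof (rule poly_mapping_eqI)
  fix k
  have "Poly_Mapping.lookup (\<Sum>\<mu>\<in>Poly_Mapping.keys p. Poly_Mapping.single \<mu> (Poly_Mapping.lookup p \<mu>)) k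
      = (\<Sum>\<mu>\<in>Poly_Mapping.keys p. if \<mu> = k then Poly_Mapping.lookup p \<mu> else 0)"
    by (simp add: lookup_sum lookup_single when_def)
  also have "\<dots> = Poly_Mapping.lookup p k" by (simp add: sum.delta in_keys_iff)
  finally show "Poly_Mapping.lookup (\<Sum>\<mu>\<in>Poly_Mapping.keys p. Poly_Mapping.single \<mu> (Poly_Mapping.lookup p \<mu>)) k
      = Poly_Mapping.lookup p k" .
qed

lemma lin_ext_mult:
  "lin_ext h (f * g) = (\<Sum>a\<in>Poly_Mapping.keys f. \<Sum>b\<in>Poly_Mapping.keys g.
      Poly_Mapping.lookup f a * Poly_Mapping.lookup g b * h (a + b))"
proof -
  have "f * g = (\<Sum>a\<in>Poly_Mapping.keys f. Poly_Mapping.single a (Poly_Mapping.lookup f a)) *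
                (\<Sum>b\<in>Poly_Mapping.keys g. Poly_Mapping.single b (Poly_Mapping.lookup g b))"
    by (simp only: sum_single_lookup)
  also have "\<dots> = (\<Sum>a\<in>Poly_Mapping.keys f. \<Sum>b\<in>Poly_Mapping.keys g.
       Poly_Mapping.single (a + b) (Poly_Mapping.lookup f a * Poly_Mapping.lookup g b))"
    by (simp add: sum_product mult_single)
  finally show ?thesis by (simp add: lin_ext_sum lin_ext_single)
qed

lemma keys_add_nat: "Poly_Mapping.keys (a + b) = Poly_Mapping.keys a \<union> Poly_Mapping.keys (b :: 'k \<Rightarrow>\<^sub>0 nat)"
  by (auto simp: in_keys_iff lookup_add)

lemma keys_diff_nat: "Poly_Mapping.keys (a - b) \<subseteq> Poly_Mapping.keys (a :: 'k \<Rightarrow>\<^sub>0 nat)"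
  by (auto simp: in_keys_iff lookup_minus)

lemma keys_subset_vars: "\<mu> \<in> Poly_Mapping.keys f \<Longrightarrow> Poly_Mapping.keys \<mu> \<subseteq> vars f"
  unfolding vars_def by blast

lemma monom_eval_superset:
  assumes "finite X" "Poly_Mapping.keys \<mu> \<subseteq> X"
  shows "monom_eval S \<mu> = (\<Prod>v\<in>X. S v ^ Poly_Mapping.lookup \<mu> v)"
  unfolding monom_eval_def by (rule prod.mono_neutral_left) (use assms in \<open>auto simp: in_keys_iff\<close>)

lemma monom_eval_add: "monom_eval S (a + b) = monom_eval S a * monom_eval S b"
proof -
  let ?X = "Poly_Mapping.keys a \<union> Poly_Mapping.keys b"
  have "monom_eval S (a + b) = (\<Prod>v\<in>?X. S v ^ Poly_Mapping.lookup (a + b) v)"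
    by (rule monom_eval_superset) (auto simp: keys_add_nat)
  also have "\<dots> = (\<Prod>v\<in>?X. S v ^ Poly_Mapping.lookup a v) * (\<Prod>v\<in>?X. S v ^ Poly_Mapping.lookup b v)"
    by (simp add: lookup_add power_add prod.distrib)
  also have "\<dots> = monom_eval S a * monom_eval S b"
    by (simp add: monom_eval_superset[symmetric])
  finally show ?thesis .
qed

lemma monom_eval_cong:
  "(\<And>v. v \<in> Poly_Mapping.keys \<mu> \<Longrightarrow> S v = S' v) \<Longrightarrow> monom_eval S \<mu> = monom_eval S' \<mu>"
  unfolding monom_eval_def by (rule prod.cong) simp_all

section \<open>Entries of the polynomial coefficient matrix\<close>

lemma lookup_mlmono: "finite W \<Longrightarrow> Poly_Mapping.lookup (mlmono W) v = (if v \<in> W then 1 else 0)"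
  unfolding mlmono_def by (simp add: lookup_sum lookup_single when_def)

lemma keys_mlmono: "finite W \<Longrightarrow> Poly_Mapping.keys (mlmono W) = W"
  by (auto simp: in_keys_iff lookup_mlmono split: if_splits)

lemma keys_mlmono_add: "finite W \<Longrightarrow> Poly_Mapping.keys (mlmono W + \<nu>) = W \<union> Poly_Mapping.keys \<nu>"
  by (simp add: keys_add_nat keys_mlmono)

lemma mlmono_add_diff:
  assumes "finite W" "Poly_Mapping.keys \<mu> = W"
  shows "mlmono W + (\<mu> - mlmono W) = \<mu>"
proof (rule poly_mapping_eqI)
  fix v
  have "v \<in> W \<Longrightarrow> Poly_Mapping.lookup \<mu> v \<noteq> 0" using assms(2) by (auto simp: in_keys_iff)
  then show "Poly_Mapping.lookup (mlmono W + (\<mu> - mlmono W)) v = Poly_Mapping.lookup \<mu> v"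
    using assms(1) by (auto simp: lookup_add lookup_minus lookup_mlmono)
qed

lemma add_diff_mlmono_Un:
  assumes "finite W1" "finite W2" "W1 \<inter> W2 = {}"
    and "W1 \<subseteq> Poly_Mapping.keys a" "W2 \<subseteq> Poly_Mapping.keys b"
  shows "a + b - mlmono (W1 \<union> W2) = (a - mlmono W1) + (b - mlmono W2)"
proof (rule poly_mapping_eqI)
  fix v
  have "Poly_Mapping.lookup (mlmono W1) v \<le> Poly_Mapping.lookup a v"
    "Poly_Mapping.lookup (mlmono W2) v \<le> Poly_Mapping.lookup b v"
    using assms by (auto simp: lookup_mlmono in_keys_iff)
  moreover have "Poly_Mapping.lookup (mlmono (W1 \<union> W2)) v =
      Poly_Mapping.lookup (mlmono W1) v + Poly_Mapping.lookup (mlmono W2) v"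
    using assms(1-3) by (auto simp: lookup_mlmono)
  ultimately show "Poly_Mapping.lookup (a + b - mlmono (W1 \<union> W2)) v =
      Poly_Mapping.lookup ((a - mlmono W1) + (b - mlmono W2)) v"
    by (simp add: lookup_add lookup_minus)
qed

lemma lookup_mono_poly_mult:
  "Poly_Mapping.lookup (mono_poly W * G) (mlmono W + \<nu>) = Poly_Mapping.lookup (G :: 'a::comm_ring_1 mpoly) \<nu>"
proof -
  have "mono_poly W * G = (\<Sum>\<nu>'\<in>Poly_Mapping.keys G. Poly_Mapping.single (mlmono W + \<nu>') (Poly_Mapping.lookup G \<nu>'))"
    unfolding mono_poly_def by (subst sum_single_lookup[of G, symmetric]) (simp add: sum_distrib_left mult_single)
  then have "Poly_Mapping.lookup (mono_poly W * G) (mlmono W + \<nu>) =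
      (\<Sum>\<nu>'\<in>Poly_Mapping.keys G. if \<nu>' = \<nu> then Poly_Mapping.lookup G \<nu>' else 0)"
    by (simp add: lookup_sum lookup_single when_def)
  also have "\<dots> = Poly_Mapping.lookup G \<nu>" by (simp add: sum.delta in_keys_iff)
  finally show ?thesis .
qed

text \<open>The entry of M_f at a pair of multilinear monomials with joint variable set W: the
  monomials of f with support exactly W, divided by the product of the variables in W.\<close>

definition entry_poly :: "'a::comm_ring_1 mpoly \<Rightarrow> var set \<Rightarrow> 'a mpoly" where
  "entry_poly f W = Abs_poly_mapping (\<lambda>\<nu>.
     if Poly_Mapping.keys \<nu> \<subseteq> W then Poly_Mapping.lookup f (mlmono W + \<nu>) else 0)"

lemma lookup_entry_poly:
  "Poly_Mapping.lookup (entry_poly f W) \<nu> =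
     (if Poly_Mapping.keys \<nu> \<subseteq> W then Poly_Mapping.lookup f (mlmono W + \<nu>) else 0)"
proof -
  have "{\<nu>. (if Poly_Mapping.keys \<nu> \<subseteq> W then Poly_Mapping.lookup f (mlmono W + \<nu>) else 0) \<noteq> 0}
      \<subseteq> (\<lambda>\<mu>. \<mu> - mlmono W) ` Poly_Mapping.keys f"
  proof
    fix \<nu> assume "\<nu> \<in> {\<nu>. (if Poly_Mapping.keys \<nu> \<subseteq> W then Poly_Mapping.lookup f (mlmono W + \<nu>) else 0) \<noteq> 0}"
    then have "mlmono W + \<nu> \<in> Poly_Mapping.keys f" by (auto simp: in_keys_iff split: if_splits)
    moreover have "\<nu> = (mlmono W + \<nu>) - mlmono W" by simp
    ultimately show "\<nu> \<in> (\<lambda>\<mu>. \<mu> - mlmono W) ` Poly_Mapping.keys f" by blast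
  qed
  then have "finite {\<nu>. (if Poly_Mapping.keys \<nu> \<subseteq> W then Poly_Mapping.lookup f (mlmono W + \<nu>) else 0) \<noteq> 0}"
    by (rule finite_subset) simp
  then show ?thesis unfolding entry_poly_def by simp
qed

definition is_coeff_entry :: "'a::comm_ring_1 mpoly \<Rightarrow> var set \<Rightarrow> 'a mpoly \<Rightarrow> bool" where
  "is_coeff_entry f W G \<longleftrightarrow> vars G \<subseteq> W \<and>
     (\<forall>\<mu>\<in>Poly_Mapping.keys (f - mono_poly W * G).
        \<not> ((\<exists>\<nu>. \<mu> = mlmono W + \<nu>) \<and> Poly_Mapping.keys \<mu> \<subseteq> W))"

lemma is_coeff_entry_unique:
  assumes W: "finite W" and G: "is_coeff_entry f W G"
  shows "G = entry_poly f W"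
proof (rule poly_mapping_eqI)
  fix \<nu>
  show "Poly_Mapping.lookup G \<nu> = Poly_Mapping.lookup (entry_poly f W) \<nu>"
  proof (cases "Poly_Mapping.keys \<nu> \<subseteq> W")
    case True
    then have "Poly_Mapping.keys (mlmono W + \<nu>) \<subseteq> W" using W by (simp add: keys_mlmono_add)
    then have "mlmono W + \<nu> \<notin> Poly_Mapping.keys (f - mono_poly W * G)"
      using G unfolding is_coeff_entry_def by blast
    then show ?thesis
      using True by (simp add: in_keys_iff lookup_minus lookup_mono_poly_mult lookup_entry_poly)
  next
    case False
    have "\<nu> \<notin> Poly_Mapping.keys G"
    proof
      assume "\<nu> \<in> Poly_Mapping.keys G"
      then have "Poly_Mapping.keys \<nu> \<subseteq> vars G" by (rule keys_subset_vars)
      then show False using G False unfolding is_coeff_entry_def by blast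
    qed
    then show ?thesis using False by (simp add: lookup_entry_poly in_keys_iff)
  qed
qed

lemma is_coeff_entry_entry_poly:
  assumes W: "finite W"
  shows "is_coeff_entry f W (entry_poly f W)"
  unfolding is_coeff_entry_def
proof (intro conjI ballI)
  show "vars (entry_poly f W) \<subseteq> W"
  proof
    fix v assume "v \<in> vars (entry_poly f W)"
    then obtain \<nu> where "\<nu> \<in> Poly_Mapping.keys (entry_poly f W)" "v \<in> Poly_Mapping.keys \<nu>"
      unfolding vars_def by blast
    then show "v \<in> W" by (auto simp: in_keys_iff lookup_entry_poly split: if_splits)
  qed
  fix \<mu> assume \<mu>: "\<mu> \<in> Poly_Mapping.keys (f - mono_poly W * entry_poly f W)"
  show "\<not> ((\<exists>\<nu>. \<mu> = mlmono W + \<nu>) \<and> Poly_Mapping.keys \<mu> \<subseteq> W)"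
  proof
    assume "(\<exists>\<nu>. \<mu> = mlmono W + \<nu>) \<and> Poly_Mapping.keys \<mu> \<subseteq> W"
    then obtain \<nu> where \<nu>: "\<mu> = mlmono W + \<nu>" and "Poly_Mapping.keys \<mu> \<subseteq> W" by blast
    then have "Poly_Mapping.keys \<nu> \<subseteq> W" using W by (simp add: keys_mlmono_add)
    then have "Poly_Mapping.lookup (f - mono_poly W * entry_poly f W) \<mu> = 0"
      unfolding \<nu> by (simp add: lookup_minus lookup_mono_poly_mult lookup_entry_poly)
    then show False using \<mu> by (simp add: in_keys_iff)
  qed
qed

lemma coeff_entry_eq_entry_poly:
  assumes "finite (P \<union> Q)"
  shows "coeff_entry f P Q = entry_poly f (P \<union> Q)"
  unfolding coeff_entry_def is_coeff_entry_def[symmetric]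
  by (rule the_equality) (use is_coeff_entry_entry_poly[OF assms] is_coeff_entry_unique[OF assms] in auto)

definition support_weight :: "(var \<Rightarrow> 'a::comm_ring_1) \<Rightarrow> var set \<Rightarrow> (var \<Rightarrow>\<^sub>0 nat) \<Rightarrow> 'a" where
  "support_weight S W \<mu> = (if Poly_Mapping.keys \<mu> = W then monom_eval S (\<mu> - mlmono W) else 0)"

lemma peval_entry_poly:
  assumes W: "finite W"
  shows "peval S (entry_poly f W) = lin_ext (support_weight S W) f"
proof -
  let ?K = "{\<mu>\<in>Poly_Mapping.keys f. Poly_Mapping.keys \<mu> = W}"
  have "lin_ext (support_weight S W) f = (\<Sum>\<mu>\<in>?K. Poly_Mapping.lookup f \<mu> * monom_eval S (\<mu> - mlmono W))"
    unfolding lin_ext_def support_weight_def by (rule sum.mono_neutral_cong_right) auto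
  also have "\<dots> = lin_ext (monom_eval S) (entry_poly f W)"
    unfolding lin_ext_def
  proof (rule sum.reindex_bij_witness[where j = "\<lambda>\<mu>. \<mu> - mlmono W" and i = "\<lambda>\<nu>. mlmono W + \<nu>"])
    fix \<mu> assume "\<mu> \<in> ?K"
    then show "mlmono W + (\<mu> - mlmono W) = \<mu>" using W mlmono_add_diff by blast
  next
    fix \<mu> assume \<mu>: "\<mu> \<in> ?K"
    then have eq: "mlmono W + (\<mu> - mlmono W) = \<mu>" using W mlmono_add_diff by blast
    have "Poly_Mapping.keys (\<mu> - mlmono W) \<subseteq> W" by (rule order_trans[OF keys_diff_nat]) (use \<mu> in simp)
    then show "\<mu> - mlmono W \<in> Poly_Mapping.keys (entry_poly f W)"
      using \<mu> by (auto simp: in_keys_iff lookup_entry_poly eq)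
  next
    fix \<nu> show "mlmono W + \<nu> - mlmono W = \<nu>" by simp
  next
    fix \<nu> assume "\<nu> \<in> Poly_Mapping.keys (entry_poly f W)"
    then have "Poly_Mapping.keys \<nu> \<subseteq> W" "Poly_Mapping.lookup f (mlmono W + \<nu>) \<noteq> 0"
      by (auto simp: in_keys_iff lookup_entry_poly split: if_splits)
    then show "mlmono W + \<nu> \<in> ?K" using W by (auto simp: in_keys_iff keys_mlmono_add)
  next
    fix \<mu> assume \<mu>: "\<mu> \<in> ?K"
    then have eq: "mlmono W + (\<mu> - mlmono W) = \<mu>" using W mlmono_add_diff by blast
    have "Poly_Mapping.keys (\<mu> - mlmono W) \<subseteq> W" by (rule order_trans[OF keys_diff_nat]) (use \<mu> in simp)
    then show "Poly_Mapping.lookup (entry_poly f W) (\<mu> - mlmono W) * monom_eval S (\<mu> - mlmono W) =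
        Poly_Mapping.lookup f \<mu> * monom_eval S (\<mu> - mlmono W)"
      by (simp add: lookup_entry_poly eq)
  qed
  finally show ?thesis by (simp add: peval_eq_lin_ext)
qed

lemma peval_coeff_entry:
  "finite (P \<union> Q) \<Longrightarrow> peval S (coeff_entry f P Q) = lin_ext (support_weight S (P \<union> Q)) f"
  by (simp add: coeff_entry_eq_entry_poly peval_entry_poly)

lemma support_weight_add:
  assumes W: "finite W" and a: "Poly_Mapping.keys a \<subseteq> V1" and b: "Poly_Mapping.keys b \<subseteq> V2"
    and V: "V1 \<inter> V2 = {}"
  shows "support_weight S W (a + b) =
    (if W \<subseteq> V1 \<union> V2 then support_weight S (W \<inter> V1) a * support_weight S (W \<inter> V2) b else 0)"
proof (cases "W \<subseteq> V1 \<union> V2")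
  case False
  then have "Poly_Mapping.keys (a + b) \<noteq> W" using a b by (auto simp: keys_add_nat)
  then show ?thesis using False by (simp add: support_weight_def)
next
  case True
  have iff: "Poly_Mapping.keys (a + b) = W \<longleftrightarrow>
      Poly_Mapping.keys a = W \<inter> V1 \<and> Poly_Mapping.keys b = W \<inter> V2"
    using True a b V unfolding keys_add_nat by blast
  show ?thesis
  proof (cases "Poly_Mapping.keys a = W \<inter> V1 \<and> Poly_Mapping.keys b = W \<inter> V2")
    case False
    then show ?thesis using iff True by (auto simp: support_weight_def)
  next
    case keys: True
    have Wun: "(W \<inter> V1) \<union> (W \<inter> V2) = W" using True by blast
    have eq: "a + b - mlmono W = (a - mlmono (W \<inter> V1)) + (b - mlmono (W \<inter> V2))"
      by (rule add_diff_mlmono_Un[of "W \<inter> V1" "W \<inter> V2" a b, unfolded Wun]) (use W V keys in auto)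
    have "support_weight S W (a + b) = monom_eval S (a + b - mlmono W)"
      using iff keys by (simp add: support_weight_def)
    also have "\<dots> = monom_eval S (a - mlmono (W \<inter> V1)) * monom_eval S (b - mlmono (W \<inter> V2))"
      by (simp only: eq monom_eval_add)
    also have "\<dots> = support_weight S (W \<inter> V1) a * support_weight S (W \<inter> V2) b"
      using keys by (simp add: support_weight_def)
    finally show ?thesis using True by simp
  qed
qed

lemma lin_ext_support_weight_mult:
  assumes W: "finite W" and f: "vars f \<subseteq> V1" and g: "vars g \<subseteq> V2" and V: "V1 \<inter> V2 = {}"
  shows "lin_ext (support_weight S W) (f * g) = (if W \<subseteq> V1 \<union> V2
    then lin_ext (support_weight S (W \<inter> V1)) f * lin_ext (support_weight S (W \<inter> V2)) g else 0)"
proof -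
  have "lin_ext (support_weight S W) (f * g) = (\<Sum>a\<in>Poly_Mapping.keys f. \<Sum>b\<in>Poly_Mapping.keys g.
      Poly_Mapping.lookup f a * Poly_Mapping.lookup g b *
      (if W \<subseteq> V1 \<union> V2 then support_weight S (W \<inter> V1) a * support_weight S (W \<inter> V2) b else 0))"
    unfolding lin_ext_mult
  proof (intro sum.cong refl)
    fix a b assume "a \<in> Poly_Mapping.keys f" "b \<in> Poly_Mapping.keys g"
    then have "Poly_Mapping.keys a \<subseteq> V1" "Poly_Mapping.keys b \<subseteq> V2"
      using keys_subset_vars f g by blast+
    then show "Poly_Mapping.lookup f a * Poly_Mapping.lookup g b * support_weight S W (a + b) =
      Poly_Mapping.lookup f a * Poly_Mapping.lookup g b *
      (if W \<subseteq> V1 \<union> V2 then support_weight S (W \<inter> V1) a * support_weight S (W \<inter> V2) b else 0)"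
      by (simp only: support_weight_add[OF W _ _ V])
  qed
  also have "\<dots> = (if W \<subseteq> V1 \<union> V2
      then lin_ext (support_weight S (W \<inter> V1)) f * lin_ext (support_weight S (W \<inter> V2)) g else 0)"
    unfolding lin_ext_def by (simp add: sum_product mult_ac)
  finally show ?thesis .
qed

lemma lin_ext_support_weight_eq_0:
  assumes f: "vars f \<subseteq> V" and W: "\<not> W \<subseteq> V"
  shows "lin_ext (support_weight S W) f = 0"
  unfolding lin_ext_def
proof (rule sum.neutral, rule ballI)
  fix \<mu> assume "\<mu> \<in> Poly_Mapping.keys f"
  then have "Poly_Mapping.keys \<mu> \<subseteq> V" by (rule order_trans[OF keys_subset_vars f])
  then have "Poly_Mapping.keys \<mu> \<noteq> W" using W by auto
  then show "Poly_Mapping.lookup f \<mu> * support_weight S W \<mu> = 0" by (simp add: support_weight_def)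
qed

lemma lin_ext_support_weight_cong:
  assumes f: "vars f \<subseteq> V" and S: "\<And>v. v \<in> V \<Longrightarrow> S v = S' v"
  shows "lin_ext (support_weight S W) f = lin_ext (support_weight S' W) f"
  unfolding lin_ext_def
proof (rule sum.cong[OF refl])
  fix \<mu> assume "\<mu> \<in> Poly_Mapping.keys f"
  then have "Poly_Mapping.keys \<mu> \<subseteq> V" by (rule order_trans[OF keys_subset_vars f])
  then have sub: "Poly_Mapping.keys (\<mu> - mlmono W) \<subseteq> V" by (rule order_trans[OF keys_diff_nat])
  have "monom_eval S (\<mu> - mlmono W) = monom_eval S' (\<mu> - mlmono W)"
    by (rule monom_eval_cong) (use S sub in blast)
  then show "Poly_Mapping.lookup f \<mu> * support_weight S W \<mu> = Poly_Mapping.lookup f \<mu> * support_weight S' W \<mu>"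
    by (simp add: support_weight_def)
qed

unbundle bit_operations_syntax

lemma idx_inj: "idx x = idx y \<Longrightarrow> x = y"
  unfolding idx_def by (rule bit_eqI) (simp add: set_eq_iff)

lemma less_two_power_iff_idx_subset: "(x::nat) < 2 ^ m \<longleftrightarrow> idx x \<subseteq> {..<m}"
proof -
  have "x < 2 ^ m \<longleftrightarrow> take_bit m x = x" by (simp add: take_bit_nat_eq_self_iff)
  also have "\<dots> \<longleftrightarrow> (\<forall>n. (n < m \<and> bit x n) = bit x n)" by (simp add: bit_eq_iff bit_take_bit_iff)
  also have "\<dots> \<longleftrightarrow> idx x \<subseteq> {..<m}" unfolding idx_def by auto
  finally show ?thesis .
qed

lemma finite_idx: "finite (idx x)"
  using less_two_power_iff_idx_subset[of x x] finite_subset by auto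

lemma idx_and: "idx (x AND y) = idx x \<inter> idx y"
  unfolding idx_def by (auto simp: bit_and_iff)

lemma idx_or: "idx (x OR y) = idx x \<union> idx y"
  unfolding idx_def by (auto simp: bit_or_iff)

lemma idx_surj: "finite T \<Longrightarrow> \<exists>x. idx x = T"
proof (induction T rule: finite_induct)
  case empty
  have "idx 0 = {}" by (simp add: idx_def)
  then show ?case by blast
next
  case (insert k T)
  then obtain x where "idx x = T" by blast
  then have "idx (set_bit k x) = insert k T" unfolding idx_def by (auto simp: bit_set_bit_iff)
  then show ?case by blast
qed

section \<open>The coefficient matrix of a product\<close>

lemma dim_Mf_eval: "dim_row (Mf_eval m f S) = 2^m" "dim_col (Mf_eval m f S) = 2^m"
  by (simp_all add: Mf_eval_def)

lemma Mf_eval_carrier: "Mf_eval m f S \<in> carrier_mat (2^m) (2^m)"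
  by (simp add: Mf_eval_def)

lemma Mf_eval_index:
  "i < 2^m \<Longrightarrow> j < 2^m \<Longrightarrow>
    Mf_eval m f S $$ (i,j) = lin_ext (support_weight S (Yv ` idx i \<union> Zv ` idx j)) f"
  by (simp add: Mf_eval_def peval_coeff_entry finite_idx)

lemma Mf_eval_cong:
  assumes "vars f \<subseteq> V" "\<And>v. v \<in> V \<Longrightarrow> S v = S' v"
  shows "Mf_eval m f S = Mf_eval m f S'"
  by (rule eq_matI)
    (auto simp: Mf_eval_def peval_coeff_entry finite_idx intro!: lin_ext_support_weight_cong[OF assms])

lemma Mf_eval_mult_index:
  fixes f g :: "'a::field mpoly"
  assumes V: "V1 \<inter> V2 = {}" and f: "vars f \<subseteq> V1" and g: "vars g \<subseteq> V2"
    and masks: "idx yf = {k. k < m \<and> Yv k \<in> V1}" "idx zf = {k. k < m \<and> Zv k \<in> V1}"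
      "idx yg = {k. k < m \<and> Yv k \<in> V2}" "idx zg = {k. k < m \<and> Zv k \<in> V2}"
    and i: "i < 2^m" and j: "j < 2^m"
  shows "Mf_eval m (f * g) S $$ (i,j) =
    (if idx i \<subseteq> idx yf \<union> idx yg \<and> idx j \<subseteq> idx zf \<union> idx zg
     then Mf_eval m f S $$ (i AND yf, j AND zf) * Mf_eval m g S $$ (i AND yg, j AND zg) else 0)"
proof -
  let ?W = "\<lambda>i j. Yv ` idx i \<union> Zv ` idx j"
  have im: "idx i \<subseteq> {..<m}" "idx j \<subseteq> {..<m}" using i j less_two_power_iff_idx_subset by blast+
  have and_less: "x AND y < 2^m" if "x < 2^m" for x y :: nat
    using that unfolding less_two_power_iff_idx_subset idx_and by blast
  have "?W i j \<subseteq> V1 \<union> V2 \<longleftrightarrow> idx i \<subseteq> idx yf \<union> idx yg \<and> idx j \<subseteq> idx zf \<union> idx zg"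
    using im unfolding masks by blast
  moreover have "?W i j \<inter> V1 = ?W (i AND yf) (j AND zf)" "?W i j \<inter> V2 = ?W (i AND yg) (j AND zg)"
    using im unfolding masks idx_and by blast+
  ultimately show ?thesis
    using lin_ext_support_weight_mult[OF _ f g V, of "?W i j" S] finite_idx
    by (simp add: Mf_eval_index i j and_less)
qed

lemma Mf_eval_support:
  assumes f: "vars f \<subseteq> V"
    and masks: "idx yf = {k. k < m \<and> Yv k \<in> V}" "idx zf = {k. k < m \<and> Zv k \<in> V}"
    and i: "i < 2^m" and j: "j < 2^m" and nz: "Mf_eval m f S $$ (i,j) \<noteq> 0"
  shows "idx i \<subseteq> idx yf \<and> idx j \<subseteq> idx zf"
proof -
  have "Yv ` idx i \<union> Zv ` idx j \<subseteq> V"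
  proof (rule ccontr)
    assume "\<not> Yv ` idx i \<union> Zv ` idx j \<subseteq> V"
    then have "Mf_eval m f S $$ (i,j) = 0"
      using lin_ext_support_weight_eq_0[OF f] by (simp add: Mf_eval_index i j)
    then show False using nz by contradiction
  qed
  moreover have "idx i \<subseteq> {..<m}" "idx j \<subseteq> {..<m}" using i j less_two_power_iff_idx_subset by blast+
  ultimately show ?thesis unfolding masks by blast
qed

lemma or_and_eq_left:
  "idx a \<subseteq> idx p \<Longrightarrow> idx b \<inter> idx p = {} \<Longrightarrow> (a OR b) AND p = a"
  by (rule idx_inj) (auto simp: idx_and idx_or)

lemma rank_Mf_eval_mult:
  fixes f g :: "'a::field mpoly"
  assumes V: "V1 \<inter> V2 = {}" and f: "vars f \<subseteq> V1" and g: "vars g \<subseteq> V2"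
  shows "vec_space.rank (2^m) (Mf_eval m (f * g) S) =
    vec_space.rank (2^m) (Mf_eval m f S) * vec_space.rank (2^m) (Mf_eval m g S)"
proof -
  have "\<exists>x. idx x = {k. k < m \<and> v k \<in> V}" for v :: "nat \<Rightarrow> var" and V
    by (rule idx_surj) simp
  then obtain yf zf yg zg where masks:
    "idx yf = {k. k < m \<and> Yv k \<in> V1}" "idx zf = {k. k < m \<and> Zv k \<in> V1}"
    "idx yg = {k. k < m \<and> Yv k \<in> V2}" "idx zg = {k. k < m \<and> Zv k \<in> V2}"
    by metis
  have disj: "idx yf \<inter> idx yg = {}" "idx zf \<inter> idx zg = {}" using V unfolding masks by auto
  have and_less: "x AND y < 2^m" if "x < 2^m" for x y :: nat
    using that unfolding less_two_power_iff_idx_subset idx_and by blast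
  have or_less: "x OR y < 2^m" if "x < 2^m" "y < 2^m" for x y :: nat
    using that unfolding less_two_power_iff_idx_subset idx_or by blast
  have comb: "a OR b < 2^m \<and> idx (a OR b) \<subseteq> idx p \<union> idx q \<and> (a OR b) AND p = a \<and> (a OR b) AND q = b"
    if "a < 2^m" "b < 2^m" "idx a \<subseteq> idx p" "idx b \<subseteq> idx q" "idx p \<inter> idx q = {}" for a b p q :: nat
    using that or_less or_and_eq_left[of a p b] or_and_eq_left[of b q a] by (auto simp: idx_or or.commute)
  have "kronecker_embedding (Mf_eval m f S) (Mf_eval m g S) (Mf_eval m (f * g) S)
      (\<lambda>i. idx i \<subseteq> idx yf) (\<lambda>j. idx j \<subseteq> idx zf) (\<lambda>i. idx i \<subseteq> idx yg) (\<lambda>j. idx j \<subseteq> idx zg)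
      (\<lambda>i. idx i \<subseteq> idx yf \<union> idx yg) (\<lambda>j. idx j \<subseteq> idx zf \<union> idx zg)
      (\<lambda>i. i AND yf) (\<lambda>j. j AND zf) (\<lambda>i. i AND yg) (\<lambda>j. j AND zg) (OR) (OR)"
  proof (unfold_locales, unfold dim_Mf_eval)
    show "idx i \<subseteq> idx yf \<and> idx j \<subseteq> idx zf"
      if "i < 2^m" "j < 2^m" "Mf_eval m f S $$ (i,j) \<noteq> 0" for i j
      using Mf_eval_support[OF f masks(1,2) that] .
    show "idx i \<subseteq> idx yg \<and> idx j \<subseteq> idx zg"
      if "i < 2^m" "j < 2^m" "Mf_eval m g S $$ (i,j) \<noteq> 0" for i j
      using Mf_eval_support[OF g masks(3,4) that] .
    show "Mf_eval m (f * g) S $$ (i,j) = (if idx i \<subseteq> idx yf \<union> idx yg \<and> idx j \<subseteq> idx zf \<union> idx zg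
        then Mf_eval m f S $$ (i AND yf, j AND zf) * Mf_eval m g S $$ (i AND yg, j AND zg) else 0)"
      if "i < 2^m" "j < 2^m" for i j
      using Mf_eval_mult_index[OF V f g masks that] .
    show "i AND yf < 2^m \<and> i AND yg < 2^m" "i AND zf < 2^m \<and> i AND zg < 2^m"
      if "i < 2^m" for i
      using and_less[OF that] by blast+
    show "a OR b < 2^m \<and> idx (a OR b) \<subseteq> idx yf \<union> idx yg \<and> (a OR b) AND yf = a \<and> (a OR b) AND yg = b"
      if "a < 2^m" "b < 2^m" "idx a \<subseteq> idx yf" "idx b \<subseteq> idx yg" for a b
      using comb[OF that disj(1)] .
    show "a OR b < 2^m \<and> idx (a OR b) \<subseteq> idx zf \<union> idx zg \<and> (a OR b) AND zf = a \<and> (a OR b) AND zg = b"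
      if "a < 2^m" "b < 2^m" "idx a \<subseteq> idx zf" "idx b \<subseteq> idx zg" for a b
      using comb[OF that disj(2)] .
  qed
  from kronecker_embedding.rank_eq_mult[OF this] show ?thesis by (simp add: dim_Mf_eval)
qed

lemma rank_le_maxrank: "vec_space.rank (2^m) (Mf_eval m f S) \<le> maxrank m f"
proof -
  have "{vec_space.rank (2^m) (Mf_eval m f S) | S. True} \<subseteq> {..2^m}"
    using vec_space.rank_le_nc[OF Mf_eval_carrier] by auto
  then show ?thesis unfolding maxrank_def by (intro Max_ge) (auto intro: finite_subset)
qed

lemma maxrank_attained:
  obtains S where "vec_space.rank (2^m) (Mf_eval m f S) = maxrank m f"
proof -
  have "{vec_space.rank (2^m) (Mf_eval m f S) | S. True} \<subseteq> {..2^m}"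
    using vec_space.rank_le_nc[OF Mf_eval_carrier] by auto
  then have "maxrank m f \<in> {vec_space.rank (2^m) (Mf_eval m f S) | S. True}"
    unfolding maxrank_def by (intro Max_in) (auto intro: finite_subset)
  then show ?thesis using that by auto
qed

lemma maxrank_mult:
  fixes f g :: "'a::field mpoly"
  assumes V: "V1 \<inter> V2 = {}" and f: "vars f \<subseteq> V1" and g: "vars g \<subseteq> V2"
  shows "maxrank m (f * g) = maxrank m f * maxrank m g"
proof (rule antisym)
  obtain S where S: "vec_space.rank (2^m) (Mf_eval m (f * g) S) = maxrank m (f * g)"
    using maxrank_attained .
  show "maxrank m (f * g) \<le> maxrank m f * maxrank m g"
    using rank_Mf_eval_mult[OF V f g, of m S] rank_le_maxrank[of m f S] rank_le_maxrank[of m g S] S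
    by (simp add: mult_le_mono)
next
  obtain Sf where Sf: "vec_space.rank (2^m) (Mf_eval m f Sf) = maxrank m f" using maxrank_attained .
  obtain Sg where Sg: "vec_space.rank (2^m) (Mf_eval m g Sg) = maxrank m g" using maxrank_attained .
  define S where "S v = (if v \<in> V1 then Sf v else Sg v)" for v
  have "Mf_eval m f S = Mf_eval m f Sf" by (rule Mf_eval_cong[OF f]) (simp add: S_def)
  moreover have "Mf_eval m g S = Mf_eval m g Sg" by (rule Mf_eval_cong[OF g]) (use V in \<open>auto simp: S_def\<close>)
  ultimately show "maxrank m f * maxrank m g \<le> maxrank m (f * g)"
    using rank_Mf_eval_mult[OF V f g, of m S] rank_le_maxrank[of m "f * g" S] Sf Sg by simp
qed

theorem proposition3:
  fixes m :: nat and Y1 Y2 Z1 Z2 :: "var set" and f g :: "'a::field mpoly"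
  assumes "Y1 \<subseteq> Yset m" "Y2 \<subseteq> Yset m" "Z1 \<subseteq> Zset m" "Z2 \<subseteq> Zset m"
    and "Y1 \<inter> Y2 = {}" "Z1 \<inter> Z2 = {}"
    and "vars f \<subseteq> Y1 \<union> Z1" "vars g \<subseteq> Y2 \<union> Z2"
  shows "maxrank m (f * g) = maxrank m f * maxrank m g"
proof (rule maxrank_mult)
  show "(Y1 \<union> Z1) \<inter> (Y2 \<union> Z2) = {}"
    using assms(1-6) unfolding Yset_def Zset_def by auto
qed (fact assms)+

end
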